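(* Every non-interleaved single-ancilla CNOT-based SEC for the gross code has circuit distance $d_{\mathrm{circ}}\le 11$.
   Context: The gross code is the $[[144,12,12]]$ bivariate bicycle CSS code: with $S_k$ the $k\times k$ cyclic shift matrix, $x=S_{12}\otimes I_6$, $y=I_{12}\otimes S_6$, $A=x^3+y+y^2$, $B=y^3+x+x^2$ (over $\mathbb{F}_2$), $H_X=[A\mid B]$ and $H_Z=[B^{T}\mid A^{T}]$; there are 72 $X$ checks and 72 $Z$ checks, each of weight six. Single-ancilla CNOT-based SEC: each check has its own dedicated ancilla. For an $X$ check the ancilla is prepared in $|+\rangle$, CNOTs go from ancilla to each of the data qubits in its support, and it is measured in $X$; for a $Z$ check the ancilla is prepared in $|0\rangle$, CNOTs go from each data qubit in its support to the ancilla, and it is measured in $Z$. Operations take one time step, each qubit in at most one operation per step; repeated for several rounds. It is non-interleaved if either all $X$-type-check CNOTs precede all overlapping $Z$-type-check CNOTs (acting on common data qubits), or all $Z$-type-check CNOTs precede all overlapping $X$-type-check CNOTs. Noise and circuit distance: each operation fails independently; failed idles are followed by a Pauli $X$, $Y$ or $Z$; failed CNOTs by a non-identity two-qubit Pauli; failed preparations prepare the orthogonal state; failed measurements flip their outcome; each such event is an error mechanism. In an $X$-basis (resp. $Z$-basis) memory experiment (data prepared in the $|+\rangle$ (resp. $|0\rangle$) product state, several noisy rounds, then all data measured in that basis, giving a perfect final round), detectors are parities of outcomes deterministic without noise. $d^X_{\mathrm{circ}}$ (resp. $d^Z_{\mathrm{circ}}$) is the minimum number of error mechanisms flipping no detector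 but flipping a logical observable, and $d_{\mathrm{circ}}=\min(d^X_{\mathrm{circ}},d^Z_{\mathrm{circ}})$. *)

theory Defs
  imports Main "HOL-Library.Extended_Nat"
begin

text \<open>Matrices over F2 are boolean-valued functions on indices; entries
  outside the intended range are irrelevant.  All matrices below are 72 x 72.\<close>

type_synonym f2mat = "nat \<Rightarrow> nat \<Rightarrow> bool"

definition madd :: "f2mat \<Rightarrow> f2mat \<Rightarrow> f2mat" where
  "madd M N = (\<lambda>i j. M i j \<noteq> N i j)"

definition mmul :: "nat \<Rightarrow> f2mat \<Rightarrow> f2mat \<Rightarrow> f2mat" where
  "mmul n M N = (\<lambda>i j. odd (card {k. k < n \<and> M i k \<and> N k j}))"

definition mid :: "nat \<Rightarrow> f2mat" where
  "mid n = (\<lambda>i j. i < n \<and> i = j)"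

fun mpow :: "nat \<Rightarrow> f2mat \<Rightarrow> nat \<Rightarrow> f2mat" where
  "mpow n M 0 = mid n"
| "mpow n M (Suc k) = mmul n M (mpow n M k)"

definition cshift :: "nat \<Rightarrow> f2mat" where
  "cshift k = (\<lambda>i j. i < k \<and> j = (i + 1) mod k)"

definition kron :: "nat \<Rightarrow> nat \<Rightarrow> f2mat \<Rightarrow> f2mat \<Rightarrow> f2mat" where
  "kron m n P Q = (\<lambda>i j. i < m*n \<and> j < m*n \<and>
                        P (i div n) (j div n) \<and> Q (i mod n) (j mod n))"

definition gx :: f2mat where "gx = kron 12 6 (cshift 12) (mid 6)"
definition gy :: f2mat where "gy = kron 12 6 (mid 12) (cshift 6)"

definition gA :: f2mat where "gA = madd (mpow 72 gx 3) (madd gy (mpow 72 gy 2))"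
definition gB :: f2mat where "gB = madd (mpow 72 gy 3) (madd gx (mpow 72 gx 2))"

text \<open>H_X = [A | B], H_Z = [B^T | A^T]; rows i < 72, data columns q < 144.\<close>
definition HX :: f2mat where
  "HX i q = (i < 72 \<and> ((q < 72 \<and> gA i q) \<or> (72 \<le> q \<and> q < 144 \<and> gB i (q - 72))))"

definition HZ :: f2mat where
  "HZ j q = (j < 72 \<and> ((q < 72 \<and> gB q j) \<or> (72 \<le> q \<and> q < 144 \<and> gA (q - 72) j)))"

definition in_kernel :: "f2mat \<Rightarrow> (nat \<Rightarrow> bool) \<Rightarrow> bool" where
  "in_kernel H u \<longleftrightarrow> (\<forall>q. u q \<longrightarrow> q < 144) \<and>
     (\<forall>i < 72. even (card {q. q < 144 \<and> H i q \<and> u q}))"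

definition in_rowspace :: "f2mat \<Rightarrow> (nat \<Rightarrow> bool) \<Rightarrow> bool" where
  "in_rowspace H v \<longleftrightarrow> (\<exists>w. \<forall>q. v q = (q < 144 \<and> odd (card {i. i < 72 \<and> w i \<and> H i q})))"

definition x_logical :: "(nat \<Rightarrow> bool) \<Rightarrow> bool" where
  "x_logical v \<longleftrightarrow> in_kernel HZ v \<and> \<not> in_rowspace HX v"

definition z_logical :: "(nat \<Rightarrow> bool) \<Rightarrow> bool" where
  "z_logical v \<longleftrightarrow> in_kernel HX v \<and> \<not> in_rowspace HZ v"

text \<open>Qubits: data 0..143, ancilla of X check i is 144+i, of Z check j is 216+j.\<close>
definition nqubits :: nat where "nqubits = 288"
definition xanc :: "nat \<Rightarrow> nat" where "xanc i = 144 + i"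
definition zanc :: "nat \<Rightarrow> nat" where "zanc j = 216 + j"

datatype op = PrepX nat | PrepZ nat | MeasX nat | MeasZ nat
  | CNOT nat nat  \<comment> \<open>control, target\<close>

fun op_qubits :: "op \<Rightarrow> nat list" where
  "op_qubits (PrepX q) = [q]"
| "op_qubits (PrepZ q) = [q]"
| "op_qubits (MeasX q) = [q]"
| "op_qubits (MeasZ q) = [q]"
| "op_qubits (CNOT c t) = [c, t]"

text \<open>A circuit is a list of time steps, each a list of operations.\<close>
type_synonym circuit = "op list list"

text \<open>A Pauli frame: X part and Z part (Y = both).\<close>
type_synonym frame = "(nat \<Rightarrow> bool) \<times> (nat \<Rightarrow> bool)"

fun apply_op :: "op \<Rightarrow> frame \<Rightarrow> frame" where
  "apply_op (CNOT c t) (fx, fz) = (fx(t := (fx t \<noteq> fx c)), fz(c := (fz c \<noteq> fz t)))"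
| "apply_op (PrepX q) (fx, fz) = (fx(q := False), fz(q := False))"
| "apply_op (PrepZ q) (fx, fz) = (fx(q := False), fz(q := False))"
| "apply_op (MeasX q) f = f"
| "apply_op (MeasZ q) f = f"

definition apply_step :: "op list \<Rightarrow> frame \<Rightarrow> frame" where
  "apply_step ops f = fold apply_op ops f"

text \<open>Error mechanisms / Pauli insertions: Ins k px pz inserts the Pauli (px,pz)
  right after time step k; Flip k q flips the outcome of the measurement of
  qubit q at step k.\<close>
datatype mech = Ins nat "nat \<Rightarrow> bool" "nat \<Rightarrow> bool" | Flip nat nat

definition add_ins :: "mech set \<Rightarrow> nat \<Rightarrow> frame \<Rightarrow> frame" where
  "add_ins F k f =
     ((\<lambda>q. fst f q \<noteq> odd (card {m \<in> F. \<exists>px pz. m = Ins k px pz \<and> px q})),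
      (\<lambda>q. snd f q \<noteq> odd (card {m \<in> F. \<exists>px pz. m = Ins k px pz \<and> pz q})))"

text \<open>Frame just before step k.\<close>
fun frame_at :: "circuit \<Rightarrow> mech set \<Rightarrow> nat \<Rightarrow> frame" where
  "frame_at C F 0 = (\<lambda>_. False, \<lambda>_. False)"
| "frame_at C F (Suc k) = add_ins F k (apply_step (C ! k) (frame_at C F k))"

definition outcomes :: "circuit \<Rightarrow> (nat \<times> nat) set" where
  "outcomes C = {(k, q). k < length C \<and> (MeasX q \<in> set (C ! k) \<or> MeasZ q \<in> set (C ! k))}"

definition flipped :: "circuit \<Rightarrow> mech set \<Rightarrow> (nat \<times> nat) set" where
  "flipped C F = {(k, q). (k, q) \<in> outcomes C \<and>
      (((MeasX q \<in> set (C ! k) \<and> snd (frame_at C F k) q) \<or>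
        (MeasZ q \<in> set (C ! k) \<and> fst (frame_at C F k) q))
       \<noteq> odd (card {m \<in> F. m = Flip k q}))}"

definition flips :: "circuit \<Rightarrow> mech set \<Rightarrow> (nat \<times> nat) set \<Rightarrow> bool" where
  "flips C F S \<longleftrightarrow> odd (card (flipped C F \<inter> S))"

definition single :: "nat \<Rightarrow> nat \<Rightarrow> bool" where
  "single q = (\<lambda>q'. q' = q)"

definition nopauli :: "nat \<Rightarrow> bool" where
  "nopauli = (\<lambda>_. False)"

text \<open>Gauge insertions: a stabilizer of the freshly prepared / freshly
  measured single-qubit state, inserted right after the operation.  The
  outcome distribution of the noiseless stabilizer circuit is a reference
  outcome XOR a uniformly random element of the span of the flip patterns of
  these insertions, so a parity is deterministic iff no gauge flips it.\<close>
definition gauges :: "circuit \<Rightarrow> mech set" where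
  "gauges C = {g. \<exists>k q. k < length C \<and>
      ((PrepX q \<in> set (C ! k) \<and> g = Ins k (single q) nopauli) \<or>
       (MeasX q \<in> set (C ! k) \<and> g = Ins k (single q) nopauli) \<or>
       (PrepZ q \<in> set (C ! k) \<and> g = Ins k nopauli (single q)) \<or>
       (MeasZ q \<in> set (C ! k) \<and> g = Ins k nopauli (single q)))}"

definition deterministic :: "circuit \<Rightarrow> (nat \<times> nat) set \<Rightarrow> bool" where
  "deterministic C S \<longleftrightarrow> S \<subseteq> outcomes C \<and> (\<forall>g \<in> gauges C. \<not> flips C {g} S)"

definition mechs :: "circuit \<Rightarrow> nat set \<Rightarrow> mech set" where
  "mechs C N = {m. \<exists>k \<in> N. k < length C \<and>
     ((\<exists>q px pz. q < nqubits \<and> q \<notin> set (concat (map op_qubits (C ! k))) \<and> (px \<or> pz) \<and>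
          m = Ins k (\<lambda>q'. q' = q \<and> px) (\<lambda>q'. q' = q \<and> pz))
    \<or> (\<exists>c t px pz. CNOT c t \<in> set (C ! k) \<and>
          (\<forall>q. q \<noteq> c \<and> q \<noteq> t \<longrightarrow> \<not> px q \<and> \<not> pz q) \<and> (\<exists>q. px q \<or> pz q) \<and>
          m = Ins k px pz)
    \<or> (\<exists>q. PrepX q \<in> set (C ! k) \<and> m = Ins k nopauli (single q))
    \<or> (\<exists>q. PrepZ q \<in> set (C ! k) \<and> m = Ins k (single q) nopauli)
    \<or> (\<exists>q. (MeasX q \<in> set (C ! k) \<or> MeasZ q \<in> set (C ! k)) \<and> m = Flip k q))}"

record sched =
  T  :: nat                       \<comment> \<open>number of time steps of one round\<close>
  pX :: "nat \<Rightarrow> nat"               \<comment> \<open>preparation time of X-check ancilla i\<close>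
  cX :: "nat \<Rightarrow> nat \<Rightarrow> nat"        \<comment> \<open>time of CNOT of X check i on data qubit q\<close>
  mX :: "nat \<Rightarrow> nat"
  pZ :: "nat \<Rightarrow> nat"
  cZ :: "nat \<Rightarrow> nat \<Rightarrow> nat"
  mZ :: "nat \<Rightarrow> nat"

definition round_step :: "sched \<Rightarrow> nat \<Rightarrow> op list" where
  "round_step s \<tau> =
     [PrepX (xanc i). i \<leftarrow> [0..<72], pX s i = \<tau>] @
     [CNOT (xanc i) q. i \<leftarrow> [0..<72], q \<leftarrow> [0..<144], HX i q \<and> cX s i q = \<tau>] @
     [MeasX (xanc i). i \<leftarrow> [0..<72], mX s i = \<tau>] @
     [PrepZ (zanc j). j \<leftarrow> [0..<72], pZ s j = \<tau>] @
     [CNOT q (zanc j). j \<leftarrow> [0..<72], q \<leftarrow> [0..<144], HZ j q \<and> cZ s j q = \<tau>] @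
     [MeasZ (zanc j). j \<leftarrow> [0..<72], mZ s j = \<tau>]"

definition sec_valid :: "sched \<Rightarrow> bool" where
  "sec_valid s \<longleftrightarrow>
     (\<forall>i < 72. pX s i < mX s i \<and> mX s i < T s \<and>
        (\<forall>q. HX i q \<longrightarrow> pX s i < cX s i q \<and> cX s i q < mX s i)) \<and>
     (\<forall>j < 72. pZ s j < mZ s j \<and> mZ s j < T s \<and>
        (\<forall>q. HZ j q \<longrightarrow> pZ s j < cZ s j q \<and> cZ s j q < mZ s j)) \<and>
     (\<forall>\<tau> < T s. distinct (concat (map op_qubits (round_step s \<tau>))))"

definition non_interleaved :: "sched \<Rightarrow> bool" where
  "non_interleaved s \<longleftrightarrow>
     (\<forall>i j q. HX i q \<longrightarrow> HZ j q \<longrightarrow> cX s i q < cZ s j q) \<or>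
     (\<forall>i j q. HX i q \<longrightarrow> HZ j q \<longrightarrow> cZ s j q < cX s i q)"

definition round_steps :: "sched \<Rightarrow> op list list" where
  "round_steps s = map (round_step s) [0..<T s]"

text \<open>X-basis (xb = True) or Z-basis memory experiment with r noisy rounds:
  noiseless data preparation (step 0), r rounds, noiseless final data
  measurement (last step).\<close>
definition memory :: "bool \<Rightarrow> sched \<Rightarrow> nat \<Rightarrow> circuit" where
  "memory xb s r =
     [map (\<lambda>q. if xb then PrepX q else PrepZ q) [0..<144]] @
     concat (replicate r (round_steps s)) @
     [map (\<lambda>q. if xb then MeasX q else MeasZ q) [0..<144]]"

definition noisy_steps :: "sched \<Rightarrow> nat \<Rightarrow> nat set" where
  "noisy_steps s r = {1..r * T s}"

text \<open>Detectors: parities of outcomes that are deterministic in the noiseless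
  experiment for every initial data product state of the memory basis that is
  a +1 eigenstate of all checks of that basis (i.e. irrespective of the
  encoded logical information).  For the X-basis experiment these initial
  states are Z^u |+>^n with u in ker H_X.\<close>
definition detector :: "bool \<Rightarrow> sched \<Rightarrow> nat \<Rightarrow> (nat \<times> nat) set \<Rightarrow> bool" where
  "detector xb s r S \<longleftrightarrow> deterministic (memory xb s r) S \<and>
     (\<forall>u. in_kernel (if xb then HX else HZ) u \<longrightarrow>
        \<not> flips (memory xb s r) {if xb then Ins 0 nopauli u else Ins 0 u nopauli} S)"

definition logical_obs :: "bool \<Rightarrow> sched \<Rightarrow> nat \<Rightarrow> (nat \<times> nat) set \<Rightarrow> bool" where
  "logical_obs xb s r S \<longleftrightarrow> (\<exists>v. (if xb then x_logical v else z_logical v) \<and>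
     S = {(length (memory xb s r) - 1, q) | q. q < 144 \<and> v q})"

definition d_circ_basis :: "bool \<Rightarrow> sched \<Rightarrow> nat \<Rightarrow> enat" where
  "d_circ_basis xb s r = Inf {enat (card F) | F.
      finite F \<and> F \<subseteq> mechs (memory xb s r) (noisy_steps s r) \<and>
      (\<forall>S. detector xb s r S \<longrightarrow> \<not> flips (memory xb s r) F S) \<and>
      (\<exists>S. logical_obs xb s r S \<and> flips (memory xb s r) F S)}"

definition d_circ :: "sched \<Rightarrow> nat \<Rightarrow> enat" where
  "d_circ s r = min (d_circ_basis True s r) (d_circ_basis False s r)"

end

(*
  Since d_circ is a minimum over both memory experiments, it suffices to find 11 error
  mechanisms in the Z-basis experiment that flip no detector but a Z logical observable.

  Let h be the time of the CNOT of X check 0 that is followed by exactly two more CNOTs of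
  that check. An X error on its ancilla right after time h in the last round spreads to the
  two data qubits a, b of those later CNOTs (a hook error). For every pair a, b in the support
  of the check there is a weight-12 X logical operator e containing both, so the hook together
  with 10 idle X errors on the rest of e leaves the data with the error e. In a non-interleaved
  schedule the idle errors can be hidden from the Z checks: if all X CNOTs come first they are
  inserted at the start of the last round, and every Z check then sees all of e; otherwise they
  are inserted at its very end, after the Z checks, which also never see the hook. Either way
  the measurement record is that of the error e on the initial state, which by definition flips
  no detector, while a Z logical operator of odd overlap with e is flipped.
*)
theory Submission
  imports Defs "HOL-Library.Multiset"
begin

section \<open>The gross code on the torus\<close>

text \<open>In the Kronecker layout of \<open>kron 12 6\<close>, an index \<open>i < 72\<close> stands for the point
  \<open>(i div 6, i mod 6)\<close> of the torus \<open>\<int>/12 \<times> \<int>/6\<close>, and \<open>x\<close>, \<open>y\<close> act as the translations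
  by \<open>(1, 0)\<close> and \<open>(0, 1)\<close>.\<close>

definition torus_shift :: "nat \<Rightarrow> nat \<Rightarrow> nat \<Rightarrow> nat" where
  "torus_shift a b i = 6 * ((i div 6 + a) mod 12) + (i mod 6 + b) mod 6"

lemma torus_shift_div: "torus_shift a b i div 6 = (i div 6 + a) mod 12"
  and torus_shift_mod: "torus_shift a b i mod 6 = (i mod 6 + b) mod 6"
  unfolding torus_shift_def by auto

lemma torus_shift_lt: "torus_shift a b i < 72"
proof -
  have "(i div 6 + a) mod 12 \<le> 11" "(i mod 6 + b) mod 6 < 6" by simp_all
  then show ?thesis unfolding torus_shift_def by linarith
qed

lemma torus_shift_eq_iff:
  "torus_shift a b i = torus_shift c d i \<longleftrightarrow>
     (i div 6 + a) mod 12 = (i div 6 + c) mod 12 \<and> (i mod 6 + b) mod 6 = (i mod 6 + d) mod 6"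
  by (metis torus_shift_def torus_shift_div torus_shift_mod)

lemma torus_shift_torus_shift: "torus_shift a b (torus_shift c d i) = torus_shift (a + c) (b + d) i"
proof -
  have "((i div 6 + c) mod 12 + a) mod 12 = (i div 6 + (a + c)) mod 12"
    unfolding mod_add_left_eq by (simp add: ac_simps)
  moreover have "((i mod 6 + d) mod 6 + b) mod 6 = (i mod 6 + (b + d)) mod 6"
    unfolding mod_add_left_eq by (simp add: ac_simps)
  ultimately show ?thesis
    by (simp add: torus_shift_def torus_shift_div torus_shift_mod)
qed

lemma torus_shift_0_0: "i < 72 \<Longrightarrow> torus_shift 0 0 i = i"
  by (simp add: torus_shift_def)

lemma eq_torus_shift_iff:
  "j = torus_shift a b i \<longleftrightarrow> j div 6 = (i div 6 + a) mod 12 \<and> j mod 6 = (i mod 6 + b) mod 6"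
  by (metis div_mult_mod_eq mult.commute torus_shift_def torus_shift_div torus_shift_mod)

lemma add_mod_neq:
  assumes "(a::nat) < b" "b < n"
  shows "(x + a) mod n \<noteq> (x + b) mod n"
proof
  assume "(x + a) mod n = (x + b) mod n"
  then have "n dvd b - a"
    using mod_eq_dvd_iff_nat[of "x + a" "x + b" n] assms(1) by simp
  then show False
    using assms by (simp add: nat_dvd_not_less)
qed

lemma funpow_torus_shift: "i < 72 \<Longrightarrow> (torus_shift a b ^^ m) i = torus_shift (m * a) (m * b) i"
  by (induction m) (simp_all add: torus_shift_0_0 torus_shift_torus_shift)

lemma mpow_permutation:
  assumes M: "\<And>i k. M i k \<longleftrightarrow> i < n \<and> k = f i" and f: "\<And>i. i < n \<Longrightarrow> f i < n"
  shows "mpow n M m i j \<longleftrightarrow> i < n \<and> j = (f ^^ m) i"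
proof (induction m arbitrary: i)
  case 0
  show ?case by (auto simp: mid_def)
next
  case (Suc m)
  have "{k. k < n \<and> M i k \<and> mpow n M m k j} = (if i < n \<and> mpow n M m (f i) j then {f i} else {})"
    using M f by auto
  then show ?case
    using Suc.IH f by (auto simp: mmul_def funpow_swap1)
qed

lemma gx_iff: "gx i j \<longleftrightarrow> i < 72 \<and> j = torus_shift 1 0 i"
proof -
  have "gx i j \<longleftrightarrow> i < 72 \<and> j < 72 \<and> j div 6 = (i div 6 + 1) mod 12 \<and> j mod 6 = (i mod 6 + 0) mod 6"
    by (auto simp: gx_def kron_def cshift_def mid_def)
  then show ?thesis
    using torus_shift_lt eq_torus_shift_iff by metis
qed

lemma gy_iff: "gy i j \<longleftrightarrow> i < 72 \<and> j = torus_shift 0 1 i"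
proof -
  have "gy i j \<longleftrightarrow> i < 72 \<and> j < 72 \<and> j div 6 = (i div 6 + 0) mod 12 \<and> j mod 6 = (i mod 6 + 1) mod 6"
    by (auto simp: gy_def kron_def cshift_def mid_def)
  then show ?thesis
    using torus_shift_lt eq_torus_shift_iff by metis
qed

lemma mpow_gx: "mpow 72 gx m i j \<longleftrightarrow> i < 72 \<and> j = torus_shift m 0 i"
  using mpow_permutation[OF gx_iff torus_shift_lt] by (auto simp: funpow_torus_shift)

lemma mpow_gy: "mpow 72 gy m i j \<longleftrightarrow> i < 72 \<and> j = torus_shift 0 m i"
  using mpow_permutation[OF gy_iff torus_shift_lt] by (auto simp: funpow_torus_shift)

lemma xor3_distinct:
  "distinct [a, b, c] \<Longrightarrow> ((j = a) \<noteq> ((j = b) \<noteq> (j = c))) \<longleftrightarrow> j \<in> {a, b, c}"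
  by auto

lemma gA_iff: "gA i j \<longleftrightarrow> i < 72 \<and> j \<in> {torus_shift 3 0 i, torus_shift 0 1 i, torus_shift 0 2 i}"
proof -
  have "distinct [torus_shift 3 0 i, torus_shift 0 1 i, torus_shift 0 2 i]"
    using add_mod_neq[of 0 1 6 "i mod 6"] add_mod_neq[of 0 2 6 "i mod 6"]
      add_mod_neq[of 1 2 6 "i mod 6"]
    by (auto simp: torus_shift_eq_iff)
  then show ?thesis
    unfolding gA_def madd_def mpow_gx mpow_gy gy_iff using xor3_distinct by auto
qed

lemma gB_iff: "gB i j \<longleftrightarrow> i < 72 \<and> j \<in> {torus_shift 0 3 i, torus_shift 1 0 i, torus_shift 2 0 i}"
proof -
  have "distinct [torus_shift 0 3 i, torus_shift 1 0 i, torus_shift 2 0 i]"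
    using add_mod_neq[of 0 3 6 "i mod 6"] add_mod_neq[of 1 2 12 "i div 6"]
    by (auto simp: torus_shift_eq_iff)
  then show ?thesis
    unfolding gB_def madd_def mpow_gx mpow_gy gx_iff using xor3_distinct by auto
qed

lemma torus_shift_inverse:
  assumes "i < 72" "q < 72" "a \<le> 12" "b \<le> 6"
  shows "q = torus_shift a b i \<longleftrightarrow> i = torus_shift (12 - a) (6 - b) q"
proof -
  have "torus_shift (12 - a) (6 - b) (torus_shift a b i) = i"
    "torus_shift a b (torus_shift (12 - a) (6 - b) q) = q"
    using assms by (simp_all add: torus_shift_torus_shift) (simp_all add: torus_shift_def)
  then show ?thesis
    by metis
qed

definition x_check_support :: "nat \<Rightarrow> nat list" where
  "x_check_support i =
     [torus_shift 3 0 i, torus_shift 0 1 i, torus_shift 0 2 i,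
      72 + torus_shift 0 3 i, 72 + torus_shift 1 0 i, 72 + torus_shift 2 0 i]"

definition x_checks_at :: "nat \<Rightarrow> nat list" where
  "x_checks_at q =
     (if q < 72 then [torus_shift 9 0 q, torus_shift 0 5 q, torus_shift 0 4 q]
      else [torus_shift 0 3 (q - 72), torus_shift 11 0 (q - 72), torus_shift 10 0 (q - 72)])"

definition z_checks_at :: "nat \<Rightarrow> nat list" where
  "z_checks_at q =
     (if q < 72 then [torus_shift 0 3 q, torus_shift 1 0 q, torus_shift 2 0 q]
      else [torus_shift 3 0 (q - 72), torus_shift 0 1 (q - 72), torus_shift 0 2 (q - 72)])"

lemma HX_iff: "HX i q \<longleftrightarrow> i < 72 \<and> q \<in> set (x_check_support i)"
  using torus_shift_lt[of _ _ i]
  by (auto simp: HX_def gA_iff gB_iff x_check_support_def)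

lemma HX_iff_x_checks_at: "HX i q \<longleftrightarrow> q < 144 \<and> i < 72 \<and> i \<in> set (x_checks_at q)"
proof (cases "i < 72")
  case True
  have inv: "q' = torus_shift a b i \<longleftrightarrow> i = torus_shift (12 - a) (6 - b) q'"
    if "q' < 72" "a \<le> 12" "b \<le> 6" for q' a b
    using torus_shift_inverse[OF True that] .
  have periodic: "torus_shift 9 6 q' = torus_shift 9 0 q'" "torus_shift 12 b q' = torus_shift 0 b q'"
    "torus_shift a 6 q' = torus_shift a 0 q'" for q' a b
    by (simp_all add: torus_shift_def)
  have "q \<in> {torus_shift 3 0 i, torus_shift 0 1 i, torus_shift 0 2 i} \<longleftrightarrow>
      i \<in> {torus_shift 9 0 q, torus_shift 0 5 q, torus_shift 0 4 q}" if "q < 72"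
    using inv[OF that, of 3 0] inv[OF that, of 0 1] inv[OF that, of 0 2] by (simp add: periodic)
  moreover have "q - 72 \<in> {torus_shift 0 3 i, torus_shift 1 0 i, torus_shift 2 0 i} \<longleftrightarrow>
      i \<in> {torus_shift 0 3 (q - 72), torus_shift 11 0 (q - 72), torus_shift 10 0 (q - 72)}"
    if "q - 72 < 72"
    using inv[OF that, of 0 3] inv[OF that, of 1 0] inv[OF that, of 2 0] by (simp add: periodic)
  ultimately show ?thesis
    using True by (auto simp: HX_def gA_iff gB_iff x_checks_at_def)
qed (simp add: HX_def)

lemma HZ_iff: "HZ j q \<longleftrightarrow> q < 144 \<and> j \<in> set (z_checks_at q)"
  using torus_shift_lt
  by (auto simp: HZ_def gA_iff gB_iff z_checks_at_def)

lemma HX_dims: "HX i q \<Longrightarrow> i < 72 \<and> q < 144"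
  by (auto simp: HX_def)

lemma HZ_dims: "HZ j q \<Longrightarrow> j < 72 \<and> q < 144"
  by (auto simp: HZ_def)

fun paired_off :: "nat list \<Rightarrow> bool" where
  "paired_off [] = True"
| "paired_off [x] = False"
| "paired_off (x # y # zs) = (x = y \<and> paired_off zs)"

lemma paired_off_even_count: "paired_off xs \<Longrightarrow> even (count_list xs j)"
  by (induction xs rule: paired_off.induct) auto

lemma card_filter_eq_count_list_concat:
  assumes "distinct E" "\<forall>q \<in> set E. distinct (f q)"
  shows "card {q \<in> set E. i \<in> set (f q)} = count_list (concat (map f E)) i"
  using assms
proof (induction E)
  case (Cons q E)
  have "count_list (f q) i = (if i \<in> set (f q) then 1 else 0)"
    using Cons.prems(2) by (simp add: count_list_eq_length_filter distinct_length_filter)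
  moreover have "{q' \<in> set (q # E). i \<in> set (f q')} =
      (if i \<in> set (f q) then insert q {q' \<in> set E. i \<in> set (f q')} else {q' \<in> set E. i \<in> set (f q')})"
    by auto
  ultimately show ?case
    using Cons by auto
qed simp

text \<open>A support is in the kernel iff every check occurs an even number of times among the checks
  acting on its qubits; \<open>paired_off\<close> tests this on the sorted list.\<close>

lemma in_kernel_of_checks_at:
  assumes H: "\<And>i q. H i q \<longleftrightarrow> q < 144 \<and> i < 72 \<and> i \<in> set (checks_at q)"
    and E: "distinct E" "\<forall>q \<in> set E. q < 144 \<and> distinct (checks_at q)"
    and paired: "paired_off (sort (concat (map checks_at E)))"
  shows "in_kernel H (\<lambda>q. q \<in> set E)"
proof -
  have distinct_checks: "\<forall>q \<in> set E. distinct (checks_at q)"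
    using E(2) by blast
  have "even (card {q. q < 144 \<and> H i q \<and> q \<in> set E})" if "i < 72" for i
  proof -
    have "{q. q < 144 \<and> H i q \<and> q \<in> set E} = {q \<in> set E. i \<in> set (checks_at q)}"
      using H E(2) that by auto
    also have "card \<dots> = count_list (concat (map checks_at E)) i"
      by (rule card_filter_eq_count_list_concat[OF E(1) distinct_checks])
    finally show ?thesis
      using paired_off_even_count[OF paired] by (metis count_mset mset_sort)
  qed
  then show ?thesis
    using E(2) by (simp add: in_kernel_def)
qed

lemma even_overlap_kernel_rowspace:
  assumes "in_kernel H e" and "in_rowspace H v"
  shows "even (card {q. q < 144 \<and> e q \<and> v q})"
proof -
  obtain w where w: "\<And>q. v q \<longleftrightarrow> q < 144 \<and> odd (card {i. i < 72 \<and> w i \<and> H i q})"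
    using assms(2) unfolding in_rowspace_def by blast
  define A where "A = {q. q < 144 \<and> e q}"
  define R where "R = {i. i < 72 \<and> w i}"
  have v: "v q \<longleftrightarrow> q < 144 \<and> odd (card {i \<in> R. H i q})" for q
    unfolding w R_def by (simp add: conj_assoc)
  have "(\<Sum>q\<in>A. card {i \<in> R. H i q}) = (\<Sum>i\<in>R. card {q \<in> A. H i q})"
    by (rule sum_multicount_gen) (auto simp: A_def R_def)
  moreover have "even (card {q \<in> A. H i q})" if "i \<in> R" for i
  proof -
    have "{q \<in> A. H i q} = {q. q < 144 \<and> H i q \<and> e q}"
      by (auto simp: A_def)
    then show ?thesis
      using assms(1) that by (simp add: in_kernel_def R_def)
  qed
  ultimately have "even (\<Sum>q\<in>A. card {i \<in> R. H i q})"
    by (simp add: dvd_sum)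
  moreover have "{q. q < 144 \<and> e q \<and> v q} = {q \<in> A. odd (card {i \<in> R. H i q})}"
    by (auto simp: v A_def)
  ultimately show ?thesis
    by (simp add: even_sum_iff A_def)
qed

definition logical_pair :: "nat list \<Rightarrow> nat list \<Rightarrow> bool" where
  "logical_pair E V \<longleftrightarrow>
     distinct E \<and> list_all (\<lambda>q. q < 144 \<and> distinct (z_checks_at q)) E \<and>
     paired_off (sort (concat (map z_checks_at E))) \<and>
     distinct V \<and> list_all (\<lambda>q. q < 144 \<and> distinct (x_checks_at q)) V \<and>
     paired_off (sort (concat (map x_checks_at V))) \<and>
     odd (length (filter (\<lambda>q. q \<in> set V) E))"

lemma logical_pair_kernel_HZ: "logical_pair E V \<Longrightarrow> in_kernel HZ (\<lambda>q. q \<in> set E)"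
  by (rule in_kernel_of_checks_at[where checks_at = z_checks_at])
    (use torus_shift_lt in \<open>auto simp: logical_pair_def HZ_iff list_all_iff z_checks_at_def\<close>)

lemma logical_pair_kernel_HX: "logical_pair E V \<Longrightarrow> in_kernel HX (\<lambda>q. q \<in> set V)"
  by (rule in_kernel_of_checks_at[where checks_at = x_checks_at])
    (auto simp: logical_pair_def HX_iff_x_checks_at list_all_iff)

lemma logical_pair_odd_overlap:
  assumes "logical_pair E V"
  shows "odd (card {q. q < 144 \<and> q \<in> set E \<and> q \<in> set V})"
proof -
  have "length (filter (\<lambda>q. q \<in> set V) E) = card ({q. q \<in> set V} \<inter> set E)"
    using assms by (simp add: logical_pair_def distinct_length_filter)
  also have "{q. q \<in> set V} \<inter> set E = {q. q < 144 \<and> q \<in> set E \<and> q \<in> set V}"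
    using assms by (auto simp: logical_pair_def list_all_iff)
  finally show ?thesis
    using assms by (simp add: logical_pair_def)
qed

text \<open>Each entry \<open>(E, V)\<close> is a weight-12 X logical operator \<open>E\<close> together with a Z logical
  operator \<open>V\<close> of odd overlap; every pair of qubits in the support of X check 0 lies in some \<open>E\<close>.\<close>

definition hook_pair_witnesses :: "(nat list \<times> nat list) list" where
  "hook_pair_witnesses = [
    ([1, 2, 4, 5, 67, 68, 70, 71, 139, 140, 142, 143], [2, 3, 20, 36, 37, 58, 84, 90, 96, 99, 102, 111]),
    ([1, 18, 25, 40, 71, 75, 82, 83, 100, 107, 123, 139], [24, 30, 31, 35, 37, 90, 97, 101, 105, 107, 110, 111]),
    ([1, 2, 10, 11, 14, 16, 20, 25, 75, 85, 86, 91], [0, 4, 14, 15, 22, 38, 54, 55, 80, 81, 89, 90]),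
    ([1, 3, 7, 12, 60, 61, 69, 70, 72, 73, 78, 134], [1, 2, 17, 25, 32, 33, 57, 83, 85, 92, 107, 108]),
    ([1, 17, 26, 67, 75, 76, 77, 84, 92, 102, 107, 124], [24, 30, 31, 35, 37, 90, 97, 101, 105, 107, 110, 111]),
    ([2, 9, 18, 26, 33, 42, 78, 83, 85, 102, 109, 131], [42, 46, 48, 49, 52, 53, 108, 112, 115, 119, 123, 125]),
    ([1, 2, 7, 9, 13, 17, 20, 75, 79, 80, 83, 86], [0, 4, 14, 15, 22, 38, 54, 55, 80, 81, 89, 90]),
    ([2, 5, 8, 10, 12, 14, 20, 72, 76, 77, 78, 86], [1, 2, 17, 25, 32, 33, 57, 83, 85, 92, 107, 108]),
    ([2, 16, 24, 38, 52, 60, 76, 84, 98, 112, 120, 134], [1, 2, 17, 25, 32, 33, 57, 83, 85, 92, 107, 108]),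
    ([18, 27, 30, 33, 36, 42, 75, 108, 109, 113, 130, 131], [15, 31, 38, 48, 54, 55, 62, 98, 113, 122, 136, 138]),
    ([6, 15, 18, 21, 27, 33, 78, 79, 101, 116, 117, 133], [15, 31, 38, 48, 54, 55, 62, 98, 113, 122, 136, 138]),
    ([14, 16, 18, 20, 25, 27, 84, 85, 86, 87, 91, 93], [0, 4, 14, 15, 22, 38, 54, 55, 80, 81, 89, 90]),
    ([1, 5, 9, 11, 12, 66, 71, 72, 75, 77, 78, 139], [1, 2, 17, 25, 32, 33, 57, 83, 85, 92, 107, 108]),
    ([9, 49, 56, 75, 84, 85, 107, 123, 130, 131, 132, 139], [24, 30, 31, 35, 37, 90, 97, 101, 105, 107, 110, 111]),
    ([7, 9, 13, 17, 18, 20, 78, 79, 80, 83, 84, 86], [0, 4, 14, 15, 22, 38, 54, 55, 80, 81, 89, 90])]"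

lemma x_check_support_0: "x_check_support 0 = [18, 1, 2, 75, 78, 84]"
  by (simp add: x_check_support_def torus_shift_def)

lemma hook_pairs_covered:
  assumes "HX 0 a" "HX 0 b" "a \<noteq> b"
  shows "\<exists>E V. logical_pair E V \<and> length E = 12 \<and> a \<in> set E \<and> b \<in> set E"
proof -
  have pairs: "list_all (\<lambda>a. list_all (\<lambda>b. a \<noteq> b \<longrightarrow>
      list_ex (\<lambda>(E, V). a \<in> set E \<and> b \<in> set E) hook_pair_witnesses) [18, 1, 2, 75, 78, 84])
      [18, 1, 2, 75, 78, 84]"
    unfolding hook_pair_witnesses_def by code_simp
  have witnesses: "list_all (\<lambda>(E, V). logical_pair E V \<and> length E = 12) hook_pair_witnesses"
    unfolding hook_pair_witnesses_def logical_pair_def z_checks_at_def x_checks_at_def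
      torus_shift_def
    by code_simp
  have "a \<in> set [18, 1, 2, 75, 78, 84]" "b \<in> set [18, 1, 2, 75, 78, 84]"
    using assms(1,2) by (simp_all add: HX_iff x_check_support_0)
  then obtain E V where "(E, V) \<in> set hook_pair_witnesses" "a \<in> set E" "b \<in> set E"
    using pairs assms(3) unfolding list_all_iff list_ex_iff by blast
  moreover have "\<forall>(E, V) \<in> set hook_pair_witnesses. logical_pair E V \<and> length E = 12"
    using witnesses by (simp only: list_all_iff)
  ultimately show ?thesis
    by blast
qed

definition prepared :: "op list \<Rightarrow> nat \<Rightarrow> bool" where
  "prepared ops q \<longleftrightarrow> PrepX q \<in> set ops \<or> PrepZ q \<in> set ops"

definition apply_layer :: "op list \<Rightarrow> frame \<Rightarrow> frame" where
  "apply_layer ops f =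
    (\<lambda>q. (fst f q \<and> \<not> prepared ops q) \<noteq> (\<exists>c. CNOT c q \<in> set ops \<and> fst f c),
     \<lambda>q. (snd f q \<and> \<not> prepared ops q) \<noteq> (\<exists>t. CNOT q t \<in> set ops \<and> snd f t))"

lemma apply_op_eq_apply_layer: "distinct (op_qubits a) \<Longrightarrow> apply_op a f = apply_layer [a] f"
  by (cases f, cases a) (auto simp: apply_layer_def prepared_def fun_eq_iff)

lemma prepared_Cons: "prepared (a # ops) q \<longleftrightarrow> prepared [a] q \<or> prepared ops q"
  by (auto simp: prepared_def)

lemma apply_layer_Cons:
  assumes "distinct (op_qubits a)" "set (op_qubits a) \<inter> set (concat (map op_qubits ops)) = {}"
  shows "apply_layer ops (apply_layer [a] f) = apply_layer (a # ops) f"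
proof -
  define qs where "qs = set (concat (map op_qubits ops))"
  define g where "g = apply_layer [a] f"
  have cnot_touched: "c \<in> qs \<and> t \<in> qs" if "CNOT c t \<in> set ops" for c t
    using that by (force simp: qs_def)
  have prepared_touched: "q \<in> qs" if "prepared ops q" for q
    using that by (force simp: qs_def prepared_def)
  have untouched: "fst g q = fst f q \<and> snd g q = snd f q \<and> \<not> prepared [a] q \<and>
      (\<forall>c. CNOT c q \<noteq> a \<and> CNOT q c \<noteq> a)"
    if "q \<notin> set (op_qubits a)" for q
    using that by (cases a) (auto simp: g_def apply_layer_def prepared_def)
  have "fst (apply_layer ops g) q = fst (apply_layer (a # ops) f) q \<and>
        snd (apply_layer ops g) q = snd (apply_layer (a # ops) f) q" for q
  proof (cases "q \<in> set (op_qubits a)")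
    case True
    then have "q \<notin> qs"
      using assms(2) by (auto simp: qs_def)
    then show ?thesis
      using cnot_touched prepared_touched
      by (auto simp: g_def apply_layer_def prepared_Cons[of a ops q])
  next
    case False
    have "fst g c = fst f c \<and> snd g c = snd f c" if "c \<in> qs" for c
      using that assms(2) untouched by (auto simp: qs_def)
    then show ?thesis
      using cnot_touched untouched[OF False]
      by (auto simp: apply_layer_def prepared_Cons[of a ops q])
  qed
  then show ?thesis
    by (auto simp: g_def intro!: prod_eqI ext)
qed

lemma fold_apply_op_eq_apply_layer:
  "distinct (concat (map op_qubits ops)) \<Longrightarrow> fold apply_op ops f = apply_layer ops f"
proof (induction ops arbitrary: f)
  case Nil
  then show ?case
    by (simp add: apply_layer_def prepared_def)
next
  case (Cons a ops)
  then show ?case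
    by (simp add: apply_op_eq_apply_layer apply_layer_Cons)
qed

lemma xanc_eq_iff [simp]: "xanc i = xanc i' \<longleftrightarrow> i = i'"
  and zanc_eq_iff [simp]: "zanc j = zanc j' \<longleftrightarrow> j = j'"
  and xanc_neq_zanc [simp]: "i < 72 \<Longrightarrow> xanc i \<noteq> zanc j"
  and zanc_neq_xanc [simp]: "i < 72 \<Longrightarrow> zanc j \<noteq> xanc i"
  and xanc_not_data [simp]: "\<not> xanc i < 144"
  and zanc_not_data [simp]: "\<not> zanc j < 144"
  by (auto simp: xanc_def zanc_def)

lemma qubit_cases:
  obtains "q < 144" | i where "i < 72" "q = xanc i" | j where "j < 72" "q = zanc j" | "288 \<le> q"
proof -
  consider "q < 144" | "144 \<le> q" "q < 216" | "216 \<le> q" "q < 288" | "288 \<le> q"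
    by linarith
  then show ?thesis
  proof cases
    case 2
    then have "q - 144 < 72" "q = xanc (q - 144)"
      by (auto simp: xanc_def)
    then show ?thesis
      using that by blast
  next
    case 3
    then have "q - 216 < 72" "q = zanc (q - 216)"
      by (auto simp: zanc_def)
    then show ?thesis
      using that by blast
  qed (use that in blast)+
qed

lemma prepared_round_step:
  "prepared (round_step s \<tau>) q \<longleftrightarrow>
     (\<exists>i<72. q = xanc i \<and> pX s i = \<tau>) \<or> (\<exists>j<72. q = zanc j \<and> pZ s j = \<tau>)"
  by (auto simp: prepared_def round_step_def)

lemma CNOT_in_round_step:
  "CNOT c t \<in> set (round_step s \<tau>) \<longleftrightarrow>
     (\<exists>i<72. c = xanc i \<and> HX i t \<and> cX s i t = \<tau>) \<or> (\<exists>j<72. t = zanc j \<and> HZ j c \<and> cZ s j c = \<tau>)"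
  by (auto simp: round_step_def dest: HX_dims HZ_dims)

definition round_step_x :: "sched \<Rightarrow> nat \<Rightarrow> (nat \<Rightarrow> bool) \<Rightarrow> nat \<Rightarrow> bool" where
  "round_step_x s \<tau> fx = fst (apply_layer (round_step s \<tau>) (fx, \<lambda>_. False))"

lemma apply_step_round_step:
  assumes "sec_valid s" "\<tau> < T s"
  shows "apply_step (round_step s \<tau>) (fx, \<lambda>_. False) = (round_step_x s \<tau> fx, \<lambda>_. False)"
proof -
  have "distinct (concat (map op_qubits (round_step s \<tau>)))"
    using assms by (simp add: sec_valid_def)
  then show ?thesis
    by (simp add: apply_step_def fold_apply_op_eq_apply_layer round_step_x_def apply_layer_def)
qed

lemma round_step_x_data:
  "q < 144 \<Longrightarrow> round_step_x s \<tau> fx q \<longleftrightarrow> fx q \<noteq> (\<exists>i<72. HX i q \<and> cX s i q = \<tau> \<and> fx (xanc i))"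
  by (auto simp: round_step_x_def apply_layer_def prepared_round_step CNOT_in_round_step
      dest: HX_dims)

lemma round_step_x_xanc:
  "i < 72 \<Longrightarrow> round_step_x s \<tau> fx (xanc i) \<longleftrightarrow> fx (xanc i) \<and> pX s i \<noteq> \<tau>"
  by (auto simp: round_step_x_def apply_layer_def prepared_round_step CNOT_in_round_step
      dest: HX_dims)

lemma round_step_x_zanc:
  "j < 72 \<Longrightarrow> round_step_x s \<tau> fx (zanc j) \<longleftrightarrow>
     (fx (zanc j) \<and> pZ s j \<noteq> \<tau>) \<noteq> (\<exists>q. HZ j q \<and> cZ s j q = \<tau> \<and> fx q)"
  by (auto simp: round_step_x_def apply_layer_def prepared_round_step CNOT_in_round_step
      dest: HX_dims)

lemma round_step_x_other: "288 \<le> q \<Longrightarrow> round_step_x s \<tau> fx q \<longleftrightarrow> fx q"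
  by (auto simp: round_step_x_def apply_layer_def prepared_round_step CNOT_in_round_step
      xanc_def zanc_def dest: HX_dims)

lemma round_step_x_zero: "round_step_x s \<tau> (\<lambda>_. False) = (\<lambda>_. False)"
  by (auto simp: round_step_x_def apply_layer_def)

lemma length_concat_replicate: "length (concat (replicate r xs)) = r * length xs"
  by (induction r) auto

lemma nth_concat_replicate:
  "n < r * length xs \<Longrightarrow> concat (replicate r xs) ! n = xs ! (n mod length xs)"
proof (induction r arbitrary: n)
  case (Suc r)
  then show ?case
    by (cases "n < length xs")
      (auto simp: nth_append length_concat_replicate le_mod_geq)
qed simp

lemma length_memory: "length (memory xb s r) = r * T s + 2"
  by (simp add: memory_def round_steps_def length_concat_replicate)

lemma memory_nth_Suc:
  assumes "k < r * T s"
  shows "memory xb s r ! Suc k = round_step s (k mod T s)"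
proof -
  have "k mod T s < T s"
    using assms by (metis mod_less_divisor mult_0_right neq0_conv not_less_zero)
  then show ?thesis
    using assms by (simp add: memory_def round_steps_def nth_append length_concat_replicate
        nth_concat_replicate)
qed

lemma memory_Z_nth_0: "memory False s r ! 0 = map PrepZ [0..<144]"
  by (simp add: memory_def)

lemma memory_Z_nth_last: "memory False s r ! Suc (r * T s) = map MeasZ [0..<144]"
  by (simp add: memory_def round_steps_def nth_append length_concat_replicate)

definition x_type :: "mech set \<Rightarrow> bool" where
  "x_type F \<longleftrightarrow> (\<forall>m \<in> F. \<exists>k px. m = Ins k px nopauli)"

definition x_inserted :: "mech set \<Rightarrow> nat \<Rightarrow> nat \<Rightarrow> bool" where
  "x_inserted F k q \<longleftrightarrow> odd (card {m \<in> F. \<exists>px pz. m = Ins k px pz \<and> px q})"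

lemma add_ins_x_type:
  assumes "x_type F"
  shows "add_ins F k (fx, \<lambda>_. False) = (\<lambda>q. fx q \<noteq> x_inserted F k q, \<lambda>_. False)"
proof -
  have no_z: "{m \<in> F. \<exists>px pz. m = Ins k px pz \<and> pz q} = {}" for q
    using assms by (auto simp: x_type_def nopauli_def)
  show ?thesis
    unfolding add_ins_def x_inserted_def no_z by simp
qed

lemma frame_at_memory_x_type:
  assumes sv: "sec_valid s" and F: "x_type F"
    and G0: "\<And>q. G 0 q \<longleftrightarrow> x_inserted F 0 q"
    and GS: "\<And>k q. k < r * T s \<Longrightarrow>
      G (Suc k) q \<longleftrightarrow> round_step_x s (k mod T s) (G k) q \<noteq> x_inserted F (Suc k) q"
  shows "k \<le> r * T s \<Longrightarrow> frame_at (memory False s r) F (Suc k) = (G k, \<lambda>_. False)"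
proof (induction k)
  case 0
  have "distinct (concat (map op_qubits (map PrepZ [0..<144])))"
    by (simp add: comp_def)
  then have "apply_step (map PrepZ [0..<144]) (\<lambda>_. False, \<lambda>_. False) = (\<lambda>_. False, \<lambda>_. False)"
    by (simp add: apply_step_def fold_apply_op_eq_apply_layer apply_layer_def)
  then show ?case
    using G0 by (simp add: memory_Z_nth_0 add_ins_x_type[OF F])
next
  case (Suc k)
  then have k: "k < r * T s"
    by simp
  then have "k mod T s < T s"
    by (metis mod_less_divisor mult_0_right neq0_conv not_less_zero)
  then show ?case
    using Suc k GS[OF k] apply_step_round_step[OF sv]
    by (simp add: memory_nth_Suc add_ins_x_type[OF F] fun_eq_iff)
qed

lemma flipped_memory_x_type:
  assumes F: "x_type F"
    and frames: "\<And>k. k \<le> r * T s \<Longrightarrow> frame_at (memory False s r) F (Suc k) = (G k, \<lambda>_. False)"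
    and silent: "\<And>k j. k < r * T s \<Longrightarrow> j < 72 \<Longrightarrow> mZ s j = k mod T s \<Longrightarrow> \<not> G k (zanc j)"
  shows "flipped (memory False s r) F = {(Suc (r * T s), q) | q. q < 144 \<and> G (r * T s) q}"
proof -
  have no_flips: "{m \<in> F. m = Flip k q} = {}" for k q
    using F by (auto simp: x_type_def)
  have "(k', q) \<in> flipped (memory False s r) F \<longleftrightarrow> k' = Suc (r * T s) \<and> q < 144 \<and> G (r * T s) q"
    for k' q
  proof (cases k')
    case 0
    then show ?thesis
      by (auto simp: flipped_def outcomes_def memory_Z_nth_0)
  next
    case (Suc k)
    consider "k < r * T s" | "k = r * T s" | "r * T s < k"
      by linarith
    then show ?thesis
    proof cases
      case 1
      then show ?thesis
        using Suc frames[of k] silent[of k]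
        by (auto simp: flipped_def no_flips memory_nth_Suc round_step_def)
    next
      case 2
      then show ?thesis
        using Suc frames[of k]
        by (auto simp: flipped_def outcomes_def no_flips memory_Z_nth_last length_memory)
    next
      case 3
      then show ?thesis
        using Suc by (auto simp: flipped_def outcomes_def length_memory)
    qed
  qed
  then show ?thesis
    by auto
qed

lemma sec_valid_X:
  "sec_valid s \<Longrightarrow> HX i q \<Longrightarrow> pX s i < cX s i q \<and> cX s i q < mX s i \<and> mX s i < T s"
  by (auto simp: sec_valid_def dest: HX_dims)

lemma sec_valid_Z:
  "sec_valid s \<Longrightarrow> HZ j q \<Longrightarrow> pZ s j < cZ s j q \<and> cZ s j q < mZ s j \<and> mZ s j < T s"
  by (auto simp: sec_valid_def dest: HZ_dims)

lemma distinct_concat_map_disjoint: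
  "distinct (concat (map f xs)) \<Longrightarrow> a \<in> set xs \<Longrightarrow> b \<in> set xs \<Longrightarrow> a \<noteq> b \<Longrightarrow>
    set (f a) \<inter> set (f b) = {}"
  by (induction xs) fastforce+

lemma round_step_shared_qubit:
  assumes "sec_valid s" "\<tau> < T s" "a \<in> set (round_step s \<tau>)" "b \<in> set (round_step s \<tau>)"
    "x \<in> set (op_qubits a)" "x \<in> set (op_qubits b)"
  shows "a = b"
  using assms distinct_concat_map_disjoint[of op_qubits "round_step s \<tau>" a b]
  by (auto simp: sec_valid_def)

lemma cX_inj:
  assumes "sec_valid s" "HX i q" "HX i q'" "cX s i q = cX s i q'"
  shows "q = q'"
  using round_step_shared_qubit[OF assms(1), of "cX s i q" "CNOT (xanc i) q" "CNOT (xanc i) q'" "xanc i"]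
    assms sec_valid_X[OF assms(1,2)] HX_dims[OF assms(2)]
  by (auto simp: CNOT_in_round_step)

lemma cZ_inj:
  assumes "sec_valid s" "HZ j q" "HZ j q'" "cZ s j q = cZ s j q'"
  shows "q = q'"
  using round_step_shared_qubit[OF assms(1), of "cZ s j q" "CNOT q (zanc j)" "CNOT q' (zanc j)" "zanc j"]
    assms sec_valid_Z[OF assms(1,2)] HZ_dims[OF assms(2)]
  by (auto simp: CNOT_in_round_step)

definition partial_syndrome :: "sched \<Rightarrow> (nat \<Rightarrow> bool) \<Rightarrow> nat \<Rightarrow> nat \<Rightarrow> bool" where
  "partial_syndrome s e j t \<longleftrightarrow> odd (card {q. HZ j q \<and> e q \<and> cZ s j q < t})"

lemma finite_HZ_row: "finite {q. HZ j q \<and> P q}"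
  by (rule finite_subset[of _ "{..<144}"]) (auto dest: HZ_dims)

lemma card_HZ_at_time:
  assumes "sec_valid s"
  shows "card {q. HZ j q \<and> cZ s j q = t \<and> e q} = (if \<exists>q. HZ j q \<and> cZ s j q = t \<and> e q then 1 else 0)"
proof (cases "\<exists>q. HZ j q \<and> cZ s j q = t \<and> e q")
  case True
  then obtain q where "HZ j q" "cZ s j q = t" "e q"
    by blast
  then have "{q. HZ j q \<and> cZ s j q = t \<and> e q} = {q}"
    using cZ_inj[OF assms] by auto
  then show ?thesis
    using True by simp
next
  case False
  then have empty: "{q. HZ j q \<and> cZ s j q = t \<and> e q} = {}"
    by auto
  show ?thesis
    unfolding empty using False by simp
qed

lemma partial_syndrome_Suc:
  assumes sv: "sec_valid s"
  shows "partial_syndrome s e j (Suc t) \<longleftrightarrow>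
    (partial_syndrome s e j t \<and> pZ s j \<noteq> t) \<noteq> (\<exists>q. HZ j q \<and> cZ s j q = t \<and> e q)"
    (is "_ \<longleftrightarrow> _ \<noteq> ?hit")
proof (cases "pZ s j = t")
  case True
  then have empty: "{q. HZ j q \<and> e q \<and> cZ s j q < Suc t} = {}"
    "{q. HZ j q \<and> e q \<and> cZ s j q < t} = {}"
    and "\<not> ?hit"
    using sec_valid_Z[OF sv, of j] by fastforce+
  then show ?thesis
    unfolding partial_syndrome_def empty by simp
next
  case False
  define before where "before = {q. HZ j q \<and> e q \<and> cZ s j q < t}"
  define now where "now = {q. HZ j q \<and> cZ s j q = t \<and> e q}"
  have "{q. HZ j q \<and> e q \<and> cZ s j q < Suc t} = before \<union> now"
    by (auto simp: before_def now_def)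
  moreover have "card (before \<union> now) = card before + card now"
    by (rule card_Un_disjoint) (auto simp: before_def now_def intro: finite_HZ_row)
  ultimately have "card {q. HZ j q \<and> e q \<and> cZ s j q < Suc t} = card before + (if ?hit then 1 else 0)"
    using card_HZ_at_time[OF sv] by (simp add: now_def)
  then show ?thesis
    using False unfolding partial_syndrome_def before_def[symmetric] by (cases ?hit) simp_all
qed

lemma partial_syndrome_0: "\<not> partial_syndrome s e j 0"
  by (simp add: partial_syndrome_def)

lemma partial_syndrome_no_error: "\<not> partial_syndrome s (\<lambda>_. False) j t"
  by (simp add: partial_syndrome_def)

lemma partial_syndrome_before_prep:
  assumes "sec_valid s" "t \<le> Suc (pZ s j)"
  shows "\<not> partial_syndrome s e j t"
proof -
  have empty: "{q. HZ j q \<and> e q \<and> cZ s j q < t} = {}"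
    using sec_valid_Z[OF assms(1), of j] assms(2) by fastforce
  show ?thesis
    unfolding partial_syndrome_def empty by simp
qed

lemma partial_syndrome_complete:
  assumes sv: "sec_valid s" and ker: "in_kernel HZ e" and "j < 72" "mZ s j \<le> t"
  shows "\<not> partial_syndrome s e j t"
proof -
  have "{q. HZ j q \<and> e q \<and> cZ s j q < t} = {q. q < 144 \<and> HZ j q \<and> e q}"
    using sec_valid_Z[OF sv, of j] assms(4) by (fastforce dest: HZ_dims)
  then show ?thesis
    using ker assms(3) unfolding partial_syndrome_def in_kernel_def by simp
qed

text \<open>The X part of the Pauli frame at round time \<open>t\<close> when the data carry \<open>D\<close>, the ancilla
  of X check 0 carries \<open>a\<close>, and every Z ancilla has collected the parity of \<open>e\<close> on the data
  qubits it has already met in this round.\<close>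

definition round_frame ::
    "sched \<Rightarrow> (nat \<Rightarrow> bool) \<Rightarrow> (nat \<Rightarrow> bool) \<Rightarrow> bool \<Rightarrow> nat \<Rightarrow> nat \<Rightarrow> bool" where
  "round_frame s e D a t q \<longleftrightarrow>
     (q < 144 \<and> D q) \<or> (q = xanc 0 \<and> a) \<or> (\<exists>j<72. q = zanc j \<and> partial_syndrome s e j t)"

lemma round_frame_data: "q < 144 \<Longrightarrow> round_frame s e D a t q \<longleftrightarrow> D q"
  and round_frame_xanc: "i < 72 \<Longrightarrow> round_frame s e D a t (xanc i) \<longleftrightarrow> i = 0 \<and> a"
  and round_frame_zanc: "j < 72 \<Longrightarrow> round_frame s e D a t (zanc j) \<longleftrightarrow> partial_syndrome s e j t"
  and round_frame_other: "288 \<le> q \<Longrightarrow> \<not> round_frame s e D a t q"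
  by (auto simp: round_frame_def xanc_def zanc_def)

lemma round_step_x_round_frame:
  assumes sv: "sec_valid s"
    and a: "a \<Longrightarrow> pX s 0 \<noteq> t"
    and seen: "\<And>j q. HZ j q \<Longrightarrow> cZ s j q = t \<Longrightarrow> D q \<longleftrightarrow> e q"
  shows "round_step_x s t (round_frame s e D a t) =
    round_frame s e (\<lambda>q. D q \<noteq> (a \<and> HX 0 q \<and> cX s 0 q = t)) a (Suc t)"
proof
  fix q
  show "round_step_x s t (round_frame s e D a t) q =
      round_frame s e (\<lambda>q. D q \<noteq> (a \<and> HX 0 q \<and> cX s 0 q = t)) a (Suc t) q"
  proof (cases q rule: qubit_cases)
    case 1
    have "(\<exists>i<72. HX i q \<and> cX s i q = t \<and> round_frame s e D a t (xanc i)) \<longleftrightarrow>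
        a \<and> HX 0 q \<and> cX s 0 q = t"
    proof
      assume "a \<and> HX 0 q \<and> cX s 0 q = t"
      then show "\<exists>i<72. HX i q \<and> cX s i q = t \<and> round_frame s e D a t (xanc i)"
        using round_frame_xanc[of 0 s e D a t] by (intro exI[of _ 0]) simp
    qed (use round_frame_xanc[of _ s e D a t] in auto)
    then show ?thesis
      using 1 by (simp add: round_step_x_data round_frame_data)
  next
    case (3 j)
    have "(\<exists>q. HZ j q \<and> cZ s j q = t \<and> round_frame s e D a t q) \<longleftrightarrow>
        (\<exists>q. HZ j q \<and> cZ s j q = t \<and> e q)"
    proof -
      have "round_frame s e D a t q \<longleftrightarrow> e q" if "HZ j q" "cZ s j q = t" for q
        using seen[OF that] round_frame_data[of q] HZ_dims[OF that(1)] by simp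
      then show ?thesis
        by blast
    qed
    then show ?thesis
      using 3 by (simp add: round_step_x_zanc round_frame_zanc partial_syndrome_Suc[OF sv])
  next
    case (2 i)
    then show ?thesis
      using a by (auto simp: round_step_x_xanc round_frame_xanc)
  next
    case 4
    then show ?thesis
      by (simp add: round_step_x_other round_frame_other)
  qed
qed

section \<open>The logical error and the hook errors\<close>

lemma in_kernel_support: "in_kernel H e \<Longrightarrow> e q \<Longrightarrow> q < 144"
  by (simp add: in_kernel_def)

lemma x_type_single: "x_type {Ins k e nopauli}"
  by (simp add: x_type_def)

lemma x_inserted_single: "x_inserted {Ins k0 e nopauli} k q \<longleftrightarrow> k = k0 \<and> e q"
proof -
  have "{m \<in> {Ins k0 e nopauli}. \<exists>px pz. m = Ins k px pz \<and> px q} =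
      (if k = k0 \<and> e q then {Ins k0 e nopauli} else {})"
    by auto
  then show ?thesis
    by (simp add: x_inserted_def)
qed

lemma round_frame_wrap:
  assumes "sec_valid s" "in_kernel HZ e"
  shows "round_frame s e D a (T s) = round_frame s e D a 0"
proof -
  have "\<not> partial_syndrome s e j (T s)" if "j < 72" for j
    using partial_syndrome_complete[OF assms that] assms(1) that
    by (simp add: sec_valid_def less_imp_le)
  then show ?thesis
    unfolding round_frame_def fun_eq_iff by (auto simp: partial_syndrome_0)
qed

lemma frame_at_reference:
  assumes sv: "sec_valid s" and ker: "in_kernel HZ e"
  shows "k \<le> r * T s \<Longrightarrow>
    frame_at (memory False s r) {Ins 0 e nopauli} (Suc k) = (round_frame s e e False (k mod T s), \<lambda>_. False)"
proof (rule frame_at_memory_x_type[OF sv x_type_single])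
  show "round_frame s e e False (0 mod T s) q \<longleftrightarrow> x_inserted {Ins 0 e nopauli} 0 q" for q
    using in_kernel_support[OF ker, of q]
    by (cases q rule: qubit_cases)
      (auto simp: x_inserted_single round_frame_data round_frame_xanc round_frame_zanc
        round_frame_other partial_syndrome_0)
next
  fix k q
  assume "k < r * T s"
  have step: "round_step_x s (k mod T s) (round_frame s e e False (k mod T s)) =
      round_frame s e e False (Suc (k mod T s))"
    using round_step_x_round_frame[OF sv, of False "k mod T s" e e] by simp
  have "round_frame s e e False (Suc k mod T s) = round_frame s e e False (Suc (k mod T s))"
    using round_frame_wrap[OF sv ker] by (simp add: mod_Suc)
  then show "round_frame s e e False (Suc k mod T s) q \<longleftrightarrow>
      round_step_x s (k mod T s) (round_frame s e e False (k mod T s)) q \<noteq>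
      x_inserted {Ins 0 e nopauli} (Suc k) q"
    by (simp add: step x_inserted_single)
qed

lemma flipped_reference:
  assumes sv: "sec_valid s" and ker: "in_kernel HZ e"
  shows "flipped (memory False s r) {Ins 0 e nopauli} = {(Suc (r * T s), q) | q. q < 144 \<and> e q}"
proof -
  have "flipped (memory False s r) {Ins 0 e nopauli} =
      {(Suc (r * T s), q) | q. q < 144 \<and> round_frame s e e False (r * T s mod T s) q}"
  proof (rule flipped_memory_x_type[OF x_type_single frame_at_reference[OF sv ker]])
    show "\<not> round_frame s e e False (k mod T s) (zanc j)"
      if "j < 72" "mZ s j = k mod T s" for k j
      using partial_syndrome_complete[OF sv ker \<open>j < 72\<close>] that by (simp add: round_frame_zanc)
  qed
  then show ?thesis
    by (auto simp: round_frame_data)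
qed

definition hook_errors :: "nat \<Rightarrow> nat \<Rightarrow> (nat \<Rightarrow> bool) \<Rightarrow> mech set" where
  "hook_errors kh K D =
     insert (Ins kh (single (xanc 0)) nopauli) ((\<lambda>q. Ins K (single q) nopauli) ` {q. q < 144 \<and> D q})"

definition hook_spread :: "sched \<Rightarrow> nat \<Rightarrow> nat \<Rightarrow> nat \<Rightarrow> bool" where
  "hook_spread s h t q \<longleftrightarrow> HX 0 q \<and> h < cX s 0 q \<and> cX s 0 q < t"

lemma x_type_hook_errors: "x_type (hook_errors kh K D)"
  by (auto simp: x_type_def hook_errors_def)

lemma x_inserted_hook_errors:
  "x_inserted (hook_errors kh K D) k q \<longleftrightarrow> (k = kh \<and> q = xanc 0) \<or> (k = K \<and> q < 144 \<and> D q)"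
proof -
  have "{m \<in> hook_errors kh K D. \<exists>px pz. m = Ins k px pz \<and> px q} =
      (if k = kh \<and> q = xanc 0 then {Ins kh (single (xanc 0)) nopauli}
       else if k = K \<and> q < 144 \<and> D q then {Ins K (single q) nopauli} else {})"
    by (auto simp: hook_errors_def single_def)
  then show ?thesis
    by (simp add: x_inserted_def)
qed

lemma finite_hook_errors: "finite (hook_errors kh K D)"
  by (simp add: hook_errors_def)

lemma card_hook_errors: "card (hook_errors kh K D) = Suc (card {q. q < 144 \<and> D q})"
proof -
  have "inj_on (\<lambda>q. Ins K (single q) nopauli) {q. q < 144 \<and> D q}"
    by (auto simp: inj_on_def single_def fun_eq_iff)
  moreover have "Ins kh (single (xanc 0)) nopauli \<notin> (\<lambda>q. Ins K (single q) nopauli) ` {q. q < 144 \<and> D q}"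
  proof
    assume "Ins kh (single (xanc 0)) nopauli \<in> (\<lambda>q. Ins K (single q) nopauli) ` {q. q < 144 \<and> D q}"
    then obtain q where "q < 144" "single (xanc 0) = single q"
      by auto
    then show False
      by (metis single_def xanc_not_data)
  qed
  ultimately show ?thesis
    by (simp add: hook_errors_def card_image)
qed

definition hook_frame_XZ :: "sched \<Rightarrow> nat \<Rightarrow> (nat \<Rightarrow> bool) \<Rightarrow> nat \<Rightarrow> nat \<Rightarrow> nat \<Rightarrow> bool" where
  "hook_frame_XZ s n e h k =
     (if k \<le> n * T s then (\<lambda>_. False)
      else round_frame s e (\<lambda>q. e q \<and> (hook_spread s h (T s) q \<longrightarrow> cX s 0 q < k - n * T s))
        (h < k - n * T s) (k - n * T s))"

lemma last_round_cases:
  fixes k n h m :: nat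
  assumes "k < Suc n * m"
  obtains "k < n * m + h" | "k = n * m + h" | t where "k = n * m + t" "h < t" "t < m"
proof -
  consider "k < n * m + h" | "k = n * m + h" | "n * m + h < k"
    by linarith
  then show thesis
  proof cases
    case 3
    then have "k = n * m + (k - n * m)" "h < k - n * m" "k - n * m < m"
      using assms by auto
    then show thesis
      using that(3) by blast
  qed (use that in blast)+
qed

lemma hook_frame_XZ_during:
  assumes sv: "sec_valid s"
    and xz: "\<And>i j q. HX i q \<Longrightarrow> HZ j q \<Longrightarrow> cX s i q < cZ s j q"
    and h: "pX s 0 < h" and spread_e: "\<And>q. hook_spread s h (T s) q \<Longrightarrow> e q"
    and t: "0 < t" "t < T s"
  shows "hook_frame_XZ s n e h (Suc (n * T s + t)) q \<longleftrightarrow>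
    round_step_x s t (hook_frame_XZ s n e h (n * T s + t)) q \<noteq> (t = h \<and> q = xanc 0)"
proof -
  have "round_step_x s t (hook_frame_XZ s n e h (n * T s + t)) =
      round_step_x s t
        (round_frame s e (\<lambda>q. e q \<and> (hook_spread s h (T s) q \<longrightarrow> cX s 0 q < t)) (h < t) t)"
    using t by (simp add: hook_frame_XZ_def)
  also have "\<dots> = round_frame s e (\<lambda>q. (e q \<and> (hook_spread s h (T s) q \<longrightarrow> cX s 0 q < t)) \<noteq>
      (h < t \<and> HX 0 q \<and> cX s 0 q = t)) (h < t) (Suc t)"
  proof (rule round_step_x_round_frame[OF sv])
    show "pX s 0 \<noteq> t" if "h < t"
      using h that by simp
    show "e q \<and> (hook_spread s h (T s) q \<longrightarrow> cX s 0 q < t) \<longleftrightarrow> e q"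
      if "HZ j q" "cZ s j q = t" for j q
      using xz[of 0 q j] that by (auto simp: hook_spread_def)
  qed
  finally have step: "round_step_x s t (hook_frame_XZ s n e h (n * T s + t)) = \<dots>" .
  have frame_Suc: "hook_frame_XZ s n e h (Suc (n * T s + t)) = round_frame s e
      (\<lambda>q. e q \<and> (hook_spread s h (T s) q \<longrightarrow> cX s 0 q < Suc t)) (h < Suc t) (Suc t)"
    by (simp add: hook_frame_XZ_def)
  show ?thesis
  proof (cases q rule: qubit_cases)
    case 1
    then show ?thesis
      unfolding frame_Suc step using t spread_e[of q]
      by (auto simp: round_frame_data hook_spread_def)
  next
    case (2 i)
    then show ?thesis
      unfolding frame_Suc step by (auto simp: round_frame_xanc)
  next
    case (3 j)
    then show ?thesis
      unfolding frame_Suc step by (simp add: round_frame_zanc)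
  next
    case 4
    then show ?thesis
      unfolding frame_Suc step by (simp add: round_frame_other xanc_def)
  qed
qed

lemma frame_at_hook_XZ:
  assumes sv: "sec_valid s"
    and xz: "\<And>i j q. HX i q \<Longrightarrow> HZ j q \<Longrightarrow> cX s i q < cZ s j q"
    and h: "pX s 0 < h" and spread_e: "\<And>q. hook_spread s h (T s) q \<Longrightarrow> e q"
  shows "k \<le> Suc n * T s \<Longrightarrow>
    frame_at (memory False s (Suc n))
      (hook_errors (Suc (n * T s + h)) (Suc (n * T s)) (\<lambda>q. e q \<and> \<not> hook_spread s h (T s) q))
      (Suc k) = (hook_frame_XZ s n e h k, \<lambda>_. False)"
proof (rule frame_at_memory_x_type[OF sv x_type_hook_errors])
  show "hook_frame_XZ s n e h 0 q \<longleftrightarrow>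
      x_inserted (hook_errors (Suc (n * T s + h)) (Suc (n * T s)) (\<lambda>q. e q \<and> \<not> hook_spread s h (T s) q)) 0 q"
    for q
    by (simp add: hook_frame_XZ_def x_inserted_hook_errors)
next
  fix k q
  assume "k < Suc n * T s"
  then show "hook_frame_XZ s n e h (Suc k) q \<longleftrightarrow>
      round_step_x s (k mod T s) (hook_frame_XZ s n e h k) q \<noteq>
      x_inserted (hook_errors (Suc (n * T s + h)) (Suc (n * T s)) (\<lambda>q. e q \<and> \<not> hook_spread s h (T s) q))
        (Suc k) q"
  proof (cases rule: last_round_cases[where h = 0])
    case 1
    then show ?thesis
      by (simp add: hook_frame_XZ_def round_step_x_zero x_inserted_hook_errors)
  next
    case 2
    have "hook_frame_XZ s n e h (Suc k) q \<longleftrightarrow> q < 144 \<and> e q \<and> \<not> hook_spread s h (T s) q"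
      using 2 h partial_syndrome_before_prep[OF sv, of 1]
      by (cases q rule: qubit_cases)
        (auto simp: hook_frame_XZ_def round_frame_data round_frame_xanc round_frame_zanc
          round_frame_other hook_spread_def)
    then show ?thesis
      using 2 h by (auto simp: hook_frame_XZ_def round_step_x_zero x_inserted_hook_errors)
  next
    case (3 t)
    then show ?thesis
      using hook_frame_XZ_during[OF sv xz h spread_e, where t = t and n = n and q = q]
      by (simp add: x_inserted_hook_errors)
  qed
qed

lemma flipped_hook_XZ:
  assumes sv: "sec_valid s" and ker: "in_kernel HZ e"
    and xz: "\<And>i j q. HX i q \<Longrightarrow> HZ j q \<Longrightarrow> cX s i q < cZ s j q"
    and h: "pX s 0 < h" "h < T s" and spread_e: "\<And>q. hook_spread s h (T s) q \<Longrightarrow> e q"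
  shows "flipped (memory False s (Suc n))
      (hook_errors (Suc (n * T s + h)) (Suc (n * T s)) (\<lambda>q. e q \<and> \<not> hook_spread s h (T s) q)) =
    {(Suc (Suc n * T s), q) | q. q < 144 \<and> e q}"
proof -
  have "flipped (memory False s (Suc n))
      (hook_errors (Suc (n * T s + h)) (Suc (n * T s)) (\<lambda>q. e q \<and> \<not> hook_spread s h (T s) q)) =
    {(Suc (Suc n * T s), q) | q. q < 144 \<and> hook_frame_XZ s n e h (Suc n * T s) q}"
  proof (rule flipped_memory_x_type[OF x_type_hook_errors frame_at_hook_XZ[OF sv xz h(1) spread_e]])
    fix k j
    assume k: "k < Suc n * T s" and j: "j < 72" "mZ s j = k mod T s"
    show "\<not> hook_frame_XZ s n e h k (zanc j)"
    proof (cases "k \<le> n * T s")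
      case False
      then have "k = n * T s + (k - n * T s)" "k - n * T s < T s"
        using k by auto
      then have "k mod T s = k - n * T s"
        by (metis mod_less mod_mult_self3)
      then show ?thesis
        using False partial_syndrome_complete[OF sv ker j(1)] j
        by (simp add: hook_frame_XZ_def round_frame_zanc)
    qed (simp add: hook_frame_XZ_def)
  qed
  moreover have "hook_frame_XZ s n e h (Suc n * T s) q \<longleftrightarrow> e q" if "q < 144" for q
    using that h spread_e[of q] sec_valid_X[OF sv, of 0 q]
    by (auto simp: hook_frame_XZ_def round_frame_data hook_spread_def)
  ultimately show ?thesis
    by auto
qed

definition hook_frame_ZX :: "sched \<Rightarrow> nat \<Rightarrow> (nat \<Rightarrow> bool) \<Rightarrow> nat \<Rightarrow> nat \<Rightarrow> nat \<Rightarrow> bool" where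
  "hook_frame_ZX s n e h k =
     (if k \<le> n * T s + h then (\<lambda>_. False)
      else round_frame s (\<lambda>_. False) (\<lambda>q. hook_spread s h (k - n * T s) q \<or> (k = Suc n * T s \<and> e q))
        True (k - n * T s))"

lemma hook_frame_ZX_during:
  assumes sv: "sec_valid s"
    and zx: "\<And>i j q. HX i q \<Longrightarrow> HZ j q \<Longrightarrow> cZ s j q < cX s i q"
    and h: "pX s 0 < h" and spread_e: "\<And>q. hook_spread s h (T s) q \<Longrightarrow> e q"
    and t: "h < t" "t < T s"
  shows "hook_frame_ZX s n e h (Suc (n * T s + t)) q \<longleftrightarrow>
    round_step_x s t (hook_frame_ZX s n e h (n * T s + t)) q \<noteq>
    (Suc t = T s \<and> q < 144 \<and> e q \<and> \<not> hook_spread s h (T s) q)"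
proof -
  have "round_step_x s t (hook_frame_ZX s n e h (n * T s + t)) =
      round_step_x s t (round_frame s (\<lambda>_. False) (hook_spread s h t) True t)"
    using t by (simp add: hook_frame_ZX_def)
  also have "\<dots> = round_frame s (\<lambda>_. False)
      (\<lambda>q. hook_spread s h t q \<noteq> (True \<and> HX 0 q \<and> cX s 0 q = t)) True (Suc t)"
  proof (rule round_step_x_round_frame[OF sv])
    show "pX s 0 \<noteq> t"
      using h t by simp
    show "hook_spread s h t q \<longleftrightarrow> False" if "HZ j q" "cZ s j q = t" for j q
      using zx[of 0 q j] that by (auto simp: hook_spread_def)
  qed
  finally have step: "round_step_x s t (hook_frame_ZX s n e h (n * T s + t)) = \<dots>" .
  have frame_Suc: "hook_frame_ZX s n e h (Suc (n * T s + t)) = round_frame s (\<lambda>_. False)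
      (\<lambda>q. hook_spread s h (Suc t) q \<or> (Suc t = T s \<and> e q)) True (Suc t)"
    using t by (simp add: hook_frame_ZX_def)
  show ?thesis
  proof (cases q rule: qubit_cases)
    case 1
    then show ?thesis
      unfolding frame_Suc step using t spread_e[of q]
      by (auto simp: round_frame_data hook_spread_def)
  next
    case (2 i)
    then show ?thesis
      unfolding frame_Suc step by (auto simp: round_frame_xanc)
  next
    case (3 j)
    then show ?thesis
      unfolding frame_Suc step by (simp add: round_frame_zanc partial_syndrome_no_error)
  next
    case 4
    then show ?thesis
      unfolding frame_Suc step by (simp add: round_frame_other)
  qed
qed

lemma frame_at_hook_ZX:
  assumes sv: "sec_valid s"
    and zx: "\<And>i j q. HX i q \<Longrightarrow> HZ j q \<Longrightarrow> cZ s j q < cX s i q"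
    and h: "pX s 0 < h" "Suc h < T s" and spread_e: "\<And>q. hook_spread s h (T s) q \<Longrightarrow> e q"
  shows "k \<le> Suc n * T s \<Longrightarrow>
    frame_at (memory False s (Suc n))
      (hook_errors (Suc (n * T s + h)) (Suc n * T s) (\<lambda>q. e q \<and> \<not> hook_spread s h (T s) q))
      (Suc k) = (hook_frame_ZX s n e h k, \<lambda>_. False)"
proof (rule frame_at_memory_x_type[OF sv x_type_hook_errors])
  show "hook_frame_ZX s n e h 0 q \<longleftrightarrow>
      x_inserted (hook_errors (Suc (n * T s + h)) (Suc n * T s) (\<lambda>q. e q \<and> \<not> hook_spread s h (T s) q)) 0 q"
    for q
    using h by (simp add: hook_frame_ZX_def x_inserted_hook_errors)
next
  fix k q
  assume "k < Suc n * T s"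
  then show "hook_frame_ZX s n e h (Suc k) q \<longleftrightarrow>
      round_step_x s (k mod T s) (hook_frame_ZX s n e h k) q \<noteq>
      x_inserted (hook_errors (Suc (n * T s + h)) (Suc n * T s) (\<lambda>q. e q \<and> \<not> hook_spread s h (T s) q))
        (Suc k) q"
  proof (cases rule: last_round_cases[where h = h])
    case 1
    then show ?thesis
      using h by (simp add: hook_frame_ZX_def round_step_x_zero x_inserted_hook_errors)
  next
    case 2
    have "hook_frame_ZX s n e h (Suc k) q \<longleftrightarrow> q = xanc 0"
      using 2 h
      by (cases q rule: qubit_cases)
        (auto simp: hook_frame_ZX_def round_frame_data round_frame_xanc round_frame_zanc
          round_frame_other partial_syndrome_no_error hook_spread_def, simp add: xanc_def)
    then show ?thesis
      using 2 h by (auto simp: hook_frame_ZX_def round_step_x_zero x_inserted_hook_errors)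
  next
    case (3 t)
    then show ?thesis
      using hook_frame_ZX_during[OF sv zx h(1) spread_e, where t = t and n = n and q = q]
      by (auto simp: x_inserted_hook_errors)
  qed
qed

lemma flipped_hook_ZX:
  assumes sv: "sec_valid s"
    and zx: "\<And>i j q. HX i q \<Longrightarrow> HZ j q \<Longrightarrow> cZ s j q < cX s i q"
    and h: "pX s 0 < h" "Suc h < T s" and spread_e: "\<And>q. hook_spread s h (T s) q \<Longrightarrow> e q"
  shows "flipped (memory False s (Suc n))
      (hook_errors (Suc (n * T s + h)) (Suc n * T s) (\<lambda>q. e q \<and> \<not> hook_spread s h (T s) q)) =
    {(Suc (Suc n * T s), q) | q. q < 144 \<and> e q}"
proof -
  have "flipped (memory False s (Suc n))
      (hook_errors (Suc (n * T s + h)) (Suc n * T s) (\<lambda>q. e q \<and> \<not> hook_spread s h (T s) q)) =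
    {(Suc (Suc n * T s), q) | q. q < 144 \<and> hook_frame_ZX s n e h (Suc n * T s) q}"
    by (rule flipped_memory_x_type[OF x_type_hook_errors frame_at_hook_ZX[OF sv zx h spread_e]])
      (auto simp: hook_frame_ZX_def round_frame_zanc partial_syndrome_no_error)
  moreover have "hook_frame_ZX s n e h (Suc n * T s) q \<longleftrightarrow> e q" if "q < 144" for q
    using that h spread_e[of q] sec_valid_X[OF sv, of 0 q]
    by (auto simp: hook_frame_ZX_def round_frame_data hook_spread_def)
  ultimately show ?thesis
    by auto
qed

lemma data_idle_round_step:
  assumes "\<And>i. HX i q \<Longrightarrow> cX s i q \<noteq> \<tau>" "\<And>j. HZ j q \<Longrightarrow> cZ s j q \<noteq> \<tau>" "q < 144"
  shows "q \<notin> set (concat (map op_qubits (round_step s \<tau>)))"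
  using assms by (auto simp: round_step_def)

lemma hook_errors_mechs:
  assumes kh: "kh \<in> noisy_steps s r" "CNOT (xanc 0) q' \<in> set (memory False s r ! kh)"
    and K: "K \<in> noisy_steps s r"
      "\<And>q. q < 144 \<Longrightarrow> q \<notin> set (concat (map op_qubits (memory False s r ! K)))"
  shows "hook_errors kh K D \<subseteq> mechs (memory False s r) (noisy_steps s r)"
proof
  fix m
  assume m: "m \<in> hook_errors kh K D"
  have noisy_length: "k < length (memory False s r)" if "k \<in> noisy_steps s r" for k
    using that by (simp add: noisy_steps_def length_memory)
  show "m \<in> mechs (memory False s r) (noisy_steps s r)"
  proof (cases "m = Ins kh (single (xanc 0)) nopauli")
    case True
    then show ?thesis
      using kh noisy_length[OF kh(1)] unfolding mechs_def
      by (intro CollectI bexI[of _ kh] conjI disjI2 disjI1 exI[of _ "xanc 0"] exI[of _ q'])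
        (auto simp: single_def nopauli_def)
  next
    case False
    then obtain q where q: "q < 144" "m = Ins K (\<lambda>q'. q' = q \<and> True) (\<lambda>q'. q' = q \<and> False)"
      using m by (auto simp: hook_errors_def single_def nopauli_def)
    then show ?thesis
      using K noisy_length[OF K(1)] unfolding mechs_def
      by (intro CollectI bexI[of _ K] conjI disjI1 exI[of _ q] exI[of _ True] exI[of _ False])
        (auto simp: nqubits_def)
  qed
qed

lemma d_circ_le_card:
  assumes sv: "sec_valid s" and ker: "in_kernel HZ e" and kv: "in_kernel HX v"
    and odd: "odd (card {q. q < 144 \<and> e q \<and> v q})"
    and F: "finite F" "F \<subseteq> mechs (memory False s r) (noisy_steps s r)"
    and flipped: "flipped (memory False s r) F = {(Suc (r * T s), q) | q. q < 144 \<and> e q}"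
  shows "d_circ s r \<le> enat (card F)"
proof -
  let ?C = "memory False s r"
  have undetected: "\<not> flips ?C F S" if "detector False s r S" for S
    using that ker unfolding detector_def flips_def flipped flipped_reference[OF sv ker, symmetric]
    by simp
  have "z_logical v"
    using kv odd even_overlap_kernel_rowspace[OF ker] by (auto simp: z_logical_def)
  then have observable: "logical_obs False s r {(Suc (r * T s), q) | q. q < 144 \<and> v q}"
    by (auto simp: logical_obs_def length_memory)
  have "flipped ?C F \<inter> {(Suc (r * T s), q) | q. q < 144 \<and> v q} =
      (\<lambda>q. (Suc (r * T s), q)) ` {q. q < 144 \<and> e q \<and> v q}"
    unfolding flipped by auto
  then have "flips ?C F {(Suc (r * T s), q) | q. q < 144 \<and> v q}"
    using odd by (simp add: flips_def card_image inj_on_def)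
  then have "enat (card F) \<in> {enat (card F) | F. finite F \<and> F \<subseteq> mechs ?C (noisy_steps s r) \<and>
      (\<forall>S. detector False s r S \<longrightarrow> \<not> flips ?C F S) \<and> (\<exists>S. logical_obs False s r S \<and> flips ?C F S)}"
    using F undetected observable by blast
  then have "d_circ_basis False s r \<le> enat (card F)"
    unfolding d_circ_basis_def by (rule Inf_lower)
  then show ?thesis
    unfolding d_circ_def by (simp add: min.coboundedI2)
qed

lemma finite_image_argmax:
  fixes f :: "'a \<Rightarrow> 'b::linorder"
  assumes "finite S" "S \<noteq> {}"
  obtains m where "m \<in> S" "\<And>y. y \<in> S \<Longrightarrow> f y \<le> f m"
proof -
  have "Max (f ` S) \<in> f ` S"
    using assms by (intro Max_in) auto
  then obtain m where "m \<in> S" "f m = Max (f ` S)"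
    by auto
  then show ?thesis
    using that assms(1) by simp
qed

lemma exists_card_greater:
  fixes f :: "'a \<Rightarrow> 'b::linorder"
  assumes "finite S" "inj_on f S" "n < card S"
  shows "\<exists>x\<in>S. card {y \<in> S. f x < f y} = n"
  using assms
proof (induction n arbitrary: S)
  case 0
  then obtain m where m: "m \<in> S" "\<And>y. y \<in> S \<Longrightarrow> f y \<le> f m"
    by (metis card.empty finite_image_argmax less_irrefl)
  then have empty: "{y \<in> S. f m < f y} = {}"
    by (auto simp: not_less[symmetric])
  show ?case
    by (intro bexI[OF _ m(1)]) (simp only: empty card.empty)
next
  case (Suc n)
  then obtain m where m: "m \<in> S" "\<And>y. y \<in> S \<Longrightarrow> f y \<le> f m"
    by (metis card.empty finite_image_argmax not_less0)
  have "inj_on f (S - {m})" "n < card (S - {m})"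
    using Suc.prems m(1) by (auto intro: inj_on_subset)
  then obtain x where x: "x \<in> S - {m}" "card {y \<in> S - {m}. f x < f y} = n"
    using Suc.IH[of "S - {m}"] Suc.prems(1) by blast
  have "f x \<noteq> f m"
    using x(1) m(1) Suc.prems(2) by (auto simp: inj_on_def)
  then have "f x < f m"
    using x(1) m(2) by (simp add: order_less_le)
  then have "{y \<in> S. f x < f y} = insert m {y \<in> S - {m}. f x < f y}"
    using m(1) by auto
  then have "card {y \<in> S. f x < f y} = Suc n"
    using x(2) Suc.prems(1) by simp
  then show ?case
    using x(1) by blast
qed

lemma hook_time_exists:
  assumes sv: "sec_valid s"
  obtains qh a b where "HX 0 qh" "a \<noteq> b"
    "\<And>q. hook_spread s (cX s 0 qh) (T s) q \<longleftrightarrow> q = a \<or> q = b"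
proof -
  have S: "{q. HX 0 q} = set [18, 1, 2, 75, 78, 84]"
    by (auto simp: HX_iff x_check_support_0)
  have "inj_on (cX s 0) {q. HX 0 q}"
    by (auto simp: inj_on_def dest: cX_inj[OF sv])
  moreover have "finite {q. HX 0 q}" "card {q. HX 0 q} = 6"
    by (simp_all add: S)
  ultimately obtain qh where qh: "HX 0 qh" "card {q \<in> {q. HX 0 q}. cX s 0 qh < cX s 0 q} = 2"
    using exists_card_greater[of "{q. HX 0 q}" "cX s 0" 2] by auto
  moreover have "{q \<in> {q. HX 0 q}. cX s 0 qh < cX s 0 q} = {q. hook_spread s (cX s 0 qh) (T s) q}"
    by (auto simp: hook_spread_def dest: sec_valid_X[OF sv])
  ultimately obtain a b where "a \<noteq> b" "{q. hook_spread s (cX s 0 qh) (T s) q} = {a, b}"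
    by (auto simp: card_2_iff)
  then show ?thesis
    using that[OF \<open>HX 0 qh\<close>] by blast
qed

lemma hook_errors_last_round_mechs:
  assumes sv: "sec_valid s" and qh: "HX 0 qh"
    and K: "\<tau> < T s" "K = Suc (n * T s + \<tau>)"
    and idle: "\<And>i q. HX i q \<Longrightarrow> cX s i q \<noteq> \<tau>" "\<And>j q. HZ j q \<Longrightarrow> cZ s j q \<noteq> \<tau>"
  shows "hook_errors (Suc (n * T s + cX s 0 qh)) K D \<subseteq>
    mechs (memory False s (Suc n)) (noisy_steps s (Suc n))"
proof (rule hook_errors_mechs)
  have h: "cX s 0 qh < T s"
    using sec_valid_X[OF sv qh] by simp
  then show "Suc (n * T s + cX s 0 qh) \<in> noisy_steps s (Suc n)" "K \<in> noisy_steps s (Suc n)"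
    using K by (auto simp: noisy_steps_def)
  show "CNOT (xanc 0) qh \<in> set (memory False s (Suc n) ! Suc (n * T s + cX s 0 qh))"
    using h qh by (simp add: memory_nth_Suc CNOT_in_round_step)
  have "memory False s (Suc n) ! K = round_step s \<tau>"
    using K by (simp add: memory_nth_Suc)
  then show "q \<notin> set (concat (map op_qubits (memory False s (Suc n) ! K)))" if "q < 144" for q
    using data_idle_round_step[OF idle that] by simp
qed

lemma hook_with_logical:
  assumes sv: "sec_valid s"
  obtains qh e v where "HX 0 qh" "in_kernel HZ e" "in_kernel HX v"
    "odd (card {q. q < 144 \<and> e q \<and> v q})"
    "\<And>q. hook_spread s (cX s 0 qh) (T s) q \<Longrightarrow> e q"
    "card {q. q < 144 \<and> e q \<and> \<not> hook_spread s (cX s 0 qh) (T s) q} = 10"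
proof -
  obtain qh a b where qh: "HX 0 qh" and "a \<noteq> b"
    and W: "\<And>q. hook_spread s (cX s 0 qh) (T s) q \<longleftrightarrow> q = a \<or> q = b"
    using hook_time_exists[OF sv] by blast
  moreover have "HX 0 a" "HX 0 b"
    using W[of a] W[of b] by (auto simp: hook_spread_def)
  ultimately obtain E V where EV: "logical_pair E V" "length E = 12" "a \<in> set E" "b \<in> set E"
    using hook_pairs_covered by blast
  have "{q. q < 144 \<and> q \<in> set E \<and> \<not> hook_spread s (cX s 0 qh) (T s) q} = set E - {a, b}"
    using W EV(1) by (auto simp: logical_pair_def list_all_iff)
  moreover have "card (set E - {a, b}) = 10"
    using EV \<open>a \<noteq> b\<close> by (simp add: logical_pair_def distinct_card card_Diff_subset)
  ultimately show ?thesis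
    using that[OF qh logical_pair_kernel_HZ[OF EV(1)] logical_pair_kernel_HX[OF EV(1)]
        logical_pair_odd_overlap[OF EV(1)]] W EV(3,4)
    by auto
qed

lemma undetected_hook_errors:
  assumes sv: "sec_valid s" and "non_interleaved s" and qh: "HX 0 qh" and ker: "in_kernel HZ e"
    and spread_e: "\<And>q. hook_spread s (cX s 0 qh) (T s) q \<Longrightarrow> e q"
  obtains K where
    "hook_errors (Suc (n * T s + cX s 0 qh)) K (\<lambda>q. e q \<and> \<not> hook_spread s (cX s 0 qh) (T s) q)
      \<subseteq> mechs (memory False s (Suc n)) (noisy_steps s (Suc n))"
    "flipped (memory False s (Suc n))
      (hook_errors (Suc (n * T s + cX s 0 qh)) K (\<lambda>q. e q \<and> \<not> hook_spread s (cX s 0 qh) (T s) q)) =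
      {(Suc (Suc n * T s), q) | q. q < 144 \<and> e q}"
proof -
  have h: "pX s 0 < cX s 0 qh" "Suc (cX s 0 qh) < T s"
    using sec_valid_X[OF sv qh] by auto
  from assms(2) consider (XZ) "\<And>i j q. HX i q \<Longrightarrow> HZ j q \<Longrightarrow> cX s i q < cZ s j q"
    | (ZX) "\<And>i j q. HX i q \<Longrightarrow> HZ j q \<Longrightarrow> cZ s j q < cX s i q"
    unfolding non_interleaved_def by blast
  then show ?thesis
  proof cases
    case XZ
    then show ?thesis
      using that hook_errors_last_round_mechs[OF sv qh, of 0 "Suc (n * T s)" n]
        flipped_hook_XZ[OF sv ker XZ h(1) _ spread_e] h sec_valid_X[OF sv] sec_valid_Z[OF sv]
      by fastforce
  next
    case ZX
    have "Suc n * T s = Suc (n * T s + (T s - 1))"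
      using h by simp
    then show ?thesis
      using that hook_errors_last_round_mechs[OF sv qh, of "T s - 1" "Suc n * T s" n]
        flipped_hook_ZX[OF sv ZX h spread_e] h sec_valid_X[OF sv] sec_valid_Z[OF sv]
      by fastforce
  qed
qed

theorem proposition4:
  fixes s :: "sched" and r :: nat
  assumes "sec_valid s" and "non_interleaved s" and "r \<ge> 1"
  shows "d_circ s r \<le> 11"
proof -
  obtain n where r: "r = Suc n"
    using assms(3) by (cases r) auto
  obtain qh e v where qh: "HX 0 qh" and ker: "in_kernel HZ e" "in_kernel HX v"
    "odd (card {q. q < 144 \<and> e q \<and> v q})"
    and spread_e: "\<And>q. hook_spread s (cX s 0 qh) (T s) q \<Longrightarrow> e q"
    and ten: "card {q. q < 144 \<and> e q \<and> \<not> hook_spread s (cX s 0 qh) (T s) q} = 10"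
    using hook_with_logical[OF assms(1)] by blast
  obtain K where mechs_flipped:
    "hook_errors (Suc (n * T s + cX s 0 qh)) K (\<lambda>q. e q \<and> \<not> hook_spread s (cX s 0 qh) (T s) q)
      \<subseteq> mechs (memory False s (Suc n)) (noisy_steps s (Suc n))"
    "flipped (memory False s (Suc n))
      (hook_errors (Suc (n * T s + cX s 0 qh)) K (\<lambda>q. e q \<and> \<not> hook_spread s (cX s 0 qh) (T s) q)) =
      {(Suc (Suc n * T s), q) | q. q < 144 \<and> e q}"
    by (rule undetected_hook_errors[OF assms(1,2) qh ker(1) spread_e])
  then show ?thesis
    using d_circ_le_card[OF assms(1) ker finite_hook_errors mechs_flipped] ten r
    by (simp add: card_hook_errors numeral_eq_enat)
qed

end
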